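(* Let $n\ge1$, $q\ge1$, $p>1$, and suppose $q+1<p$. For each $w\in C(\mathbb{H}^n)\cap L^\infty(\mathbb{H}^n)$ with $w>0$, there is $A>0$ such that if $u_0=Aw$, then there are no positive global classical solutions of $$u_t=u^q\Delta_{\mathbb{H}}u+u^p\ (t>0,\ \eta\in\mathbb{H}^n),\qquad u(0,\eta)=u_0(\eta).$$
   Context: $\mathbb{H}^n$ is $\mathbb{R}^{2n+1}$ with points $\eta=(x,y,\tau)$, $x,y\in\mathbb{R}^n$, $\tau\in\mathbb{R}$, group law $\eta\circ\eta'=(x+x',y+y',\tau+\tau'+2(x\cdot y'-x'\cdot y))$. $X_i=\partial_{x_i}-2y_i\partial_\tau$, $Y_i=\partial_{y_i}+2x_i\partial_\tau$ ($i=1,\dots,n$), and $\Delta_{\mathbb{H}}=\sum_{i=1}^n(X_i^2+Y_i^2)$. A global classical solution is a classical solution on $[0,T]\times\mathbb{H}^n$ for every $T>0$. *)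

theory Defs
  imports "HOL-Analysis.Analysis"
begin

type_synonym 'n heis = "(real^'n) \<times> (real^'n) \<times> real"

definition heis_mult :: "'n::finite heis \<Rightarrow> 'n heis \<Rightarrow> 'n heis" where
  "heis_mult a b = (case a of (x, y, \<tau>) \<Rightarrow> case b of (x', y', \<tau>') \<Rightarrow>
     (x + x', y + y', \<tau> + \<tau>' + 2 * (x \<bullet> y' - x' \<bullet> y)))"

definition dirder :: "('n::finite heis \<Rightarrow> real) \<Rightarrow> 'n heis \<Rightarrow> 'n heis \<Rightarrow> real" where
  "dirder f \<eta> v = deriv (\<lambda>s. f (\<eta> + s *\<^sub>R v)) 0"

definition heisX :: "'n::finite \<Rightarrow> ('n heis \<Rightarrow> real) \<Rightarrow> 'n heis \<Rightarrow> real" where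
  "heisX i f \<eta> = dirder f \<eta> (axis i 1, 0, 0) - 2 * (fst (snd \<eta>) $ i) * dirder f \<eta> (0, 0, 1)"

definition heisY :: "'n::finite \<Rightarrow> ('n heis \<Rightarrow> real) \<Rightarrow> 'n heis \<Rightarrow> real" where
  "heisY i f \<eta> = dirder f \<eta> (0, axis i 1, 0) + 2 * (fst \<eta> $ i) * dirder f \<eta> (0, 0, 1)"

definition heis_lap :: "('n::finite heis \<Rightarrow> real) \<Rightarrow> 'n heis \<Rightarrow> real" where
  "heis_lap f \<eta> = (\<Sum>i\<in>UNIV. heisX i (heisX i f) \<eta> + heisY i (heisY i f) \<eta>)"

text \<open>Classical solution on [0,T] x H^n of u_t = u^q Lap_H u + u^p, u(0) = u0:
  u continuous on [0,T] x H^n, u in C^{2,1}((0,T] x H^n) (time derivative and all Euclidean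
  spatial partial derivatives up to order two exist and are jointly continuous), and the
  equation holds pointwise on (0,T] x H^n.\<close>
definition classical_solution ::
  "real \<Rightarrow> real \<Rightarrow> real \<Rightarrow> ('n::finite heis \<Rightarrow> real) \<Rightarrow> (real \<Rightarrow> 'n heis \<Rightarrow> real) \<Rightarrow> bool" where
  "classical_solution T q p u0 u \<longleftrightarrow>
     continuous_on ({0..T} \<times> UNIV) (\<lambda>(t, \<eta>). u t \<eta>) \<and>
     (\<forall>\<eta>. u 0 \<eta> = u0 \<eta>) \<and>
     (\<exists>ut D1 D2.
        (\<forall>t\<in>{0<..T}. \<forall>\<eta>. ((\<lambda>s. u s \<eta>) has_real_derivative ut t \<eta>) (at t within {0..T})) \<and>
        continuous_on ({0<..T} \<times> UNIV) (\<lambda>(t, \<eta>). ut t \<eta>) \<and>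
        (\<forall>b\<in>Basis. \<forall>t\<in>{0<..T}. \<forall>\<eta>.
            ((\<lambda>s. u t (\<eta> + s *\<^sub>R b)) has_real_derivative D1 b t \<eta>) (at 0)) \<and>
        (\<forall>b\<in>Basis. \<forall>c\<in>Basis. \<forall>t\<in>{0<..T}. \<forall>\<eta>.
            ((\<lambda>s. D1 c t (\<eta> + s *\<^sub>R b)) has_real_derivative D2 b c t \<eta>) (at 0)) \<and>
        (\<forall>b\<in>Basis. continuous_on ({0<..T} \<times> UNIV) (\<lambda>(t, \<eta>). D1 b t \<eta>)) \<and>
        (\<forall>b\<in>Basis. \<forall>c\<in>Basis. continuous_on ({0<..T} \<times> UNIV) (\<lambda>(t, \<eta>). D2 b c t \<eta>)) \<and>
        (\<forall>t\<in>{0<..T}. \<forall>\<eta>. ut t \<eta> = (u t \<eta>) powr q * heis_lap (u t) \<eta> + (u t \<eta>) powr p))"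

definition global_classical_solution ::
  "real \<Rightarrow> real \<Rightarrow> ('n::finite heis \<Rightarrow> real) \<Rightarrow> (real \<Rightarrow> 'n heis \<Rightarrow> real) \<Rightarrow> bool" where
  "global_classical_solution q p u0 u \<longleftrightarrow> (\<forall>T>0. classical_solution T q p u0 u)"

end

theory Submission
  imports Defs
begin

(* Blow-up by comparison with a self-similar subsolution. With \<theta>(t) = 1 - t/T, the function
   v(t, \<eta>) = a \<theta>^-\<alpha> - a \<theta>^-(\<alpha>+\<gamma>) |\<eta>|^2, where \<alpha> = 1/(p-1) and \<gamma> = (p-q-1)/(p-1),
   is a strict subsolution wherever it is positive, for a large and T = T(a); its peak a \<theta>^-\<alpha>
   tends to infinity as t \<rightarrow> T. If u_0 > a on the unit ball then u > v at t = 0, while v(t, 0)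
   eventually exceeds the maximum of the continuous u(., 0) on [0, T]. Since v < 0 < u outside the
   unit ball, u touches v from above for a first time t_0 > 0 at some \<eta>_0 with |\<eta>_0| \<le> 1. There
   u_t \<le> v_t, and u - v has a spatial minimum. Because the coefficients of X_i = \<partial>x_i - 2 y_i \<partial>\<tau>
   are constant along its own direction, X_i^2 is a second directional derivative, so the minimum gives
   \<Delta>_H u \<ge> -2 b (2n + 4) with b = a \<theta>^-(\<alpha>+\<gamma>). Inserted into the equation, this contradicts the
   strict subsolution inequality for v. *)

section \<open>Second directional derivatives\<close>

(* Continuity of the b2-partial makes F differentiable on the plane through \<eta> spanned by b1, b2
   (has_derivative_partialsI); then apply the chain rule along s \<mapsto> (s, k s). *)
lemma has_real_derivative_along_add_scaled:
  fixes F :: "'a::real_normed_vector \<Rightarrow> real"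
  assumes d1: "\<And>\<xi>. ((\<lambda>s. F (\<xi> + s *\<^sub>R b1)) has_real_derivative G1 \<xi>) (at 0)"
    and d2: "\<And>\<xi>. ((\<lambda>s. F (\<xi> + s *\<^sub>R b2)) has_real_derivative G2 \<xi>) (at 0)"
    and cont: "continuous_on UNIV G2"
  shows "((\<lambda>s. F (\<eta> + s *\<^sub>R (b1 + k *\<^sub>R b2))) has_real_derivative G1 \<eta> + k * G2 \<eta>) (at 0)"
proof -
  define f where "f = (\<lambda>x y. F (\<eta> + x *\<^sub>R b1 + y *\<^sub>R b2))"
  have fx: "((\<lambda>x. f x 0) has_derivative (\<lambda>h. G1 \<eta> * h)) (at 0 within UNIV)"
    using d1[of \<eta>] unfolding f_def has_field_derivative_def by simp
  have fy: "((\<lambda>y. f x y) has_derivative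
      blinfun_apply (blinfun_scaleR_left (G2 (\<eta> + x *\<^sub>R b1 + y *\<^sub>R b2)))) (at y within UNIV)" for x y
  proof -
    have "((\<lambda>s. F ((\<eta> + x *\<^sub>R b1 + y *\<^sub>R b2) + (s - y) *\<^sub>R b2))
        has_real_derivative G2 (\<eta> + x *\<^sub>R b1 + y *\<^sub>R b2)) (at y)"
      using DERIV_shift[of "\<lambda>s. F ((\<eta> + x *\<^sub>R b1 + y *\<^sub>R b2) + s *\<^sub>R b2)" _ y "-y"]
        d2[of "\<eta> + x *\<^sub>R b1 + y *\<^sub>R b2"] by simp
    moreover have "(\<lambda>s. F ((\<eta> + x *\<^sub>R b1 + y *\<^sub>R b2) + (s - y) *\<^sub>R b2)) = f x"
      unfolding f_def by (auto simp: algebra_simps)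
    ultimately have "(f x has_derivative (\<lambda>h. G2 (\<eta> + x *\<^sub>R b1 + y *\<^sub>R b2) * h)) (at y)"
      unfolding has_field_derivative_def by simp
    then show ?thesis by (simp add: mult.commute)
  qed
  have "continuous_on UNIV (\<lambda>z::real \<times> real. blinfun_scaleR_left (G2 (\<eta> + fst z *\<^sub>R b1 + snd z *\<^sub>R b2)))"
    by (intro continuous_intros continuous_on_compose2[OF cont]) auto
  then have fy_cont: "continuous (at (0, 0) within UNIV \<times> UNIV)
      (\<lambda>(x, y). blinfun_scaleR_left (G2 (\<eta> + x *\<^sub>R b1 + y *\<^sub>R b2)))"
    by (simp add: continuous_on_eq_continuous_within case_prod_beta')
  have D: "((\<lambda>(x, y). f x y) has_derivative (\<lambda>(h1, h2). G1 \<eta> * h1 + h2 * G2 \<eta>)) (at (0, k * 0))"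
    using has_derivative_partialsI[where f=f and X=UNIV and Y=UNIV and x=0 and y=0, OF fx fy fy_cont]
    by simp
  have L: "((\<lambda>s. (s, k * s)) has_derivative (\<lambda>h. (h, k * h))) (at 0)"
    by (auto intro!: derivative_eq_intros)
  have "((\<lambda>s. f s (k * s)) has_derivative (\<lambda>h. G1 \<eta> * h + k * h * G2 \<eta>)) (at 0)"
    using diff_chain_at[OF L D] by (simp add: o_def)
  moreover have "(\<lambda>s. f s (k * s)) = (\<lambda>s. F (\<eta> + s *\<^sub>R (b1 + k *\<^sub>R b2)))"
    unfolding f_def by (auto simp: algebra_simps)
  ultimately have "((\<lambda>s. F (\<eta> + s *\<^sub>R (b1 + k *\<^sub>R b2)))
      has_derivative (\<lambda>h. G1 \<eta> * h + k * h * G2 \<eta>)) (at 0)"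
    by simp
  then show ?thesis
    unfolding has_field_derivative_def
    by (rule has_derivative_eq_rhs) (simp add: fun_eq_iff algebra_simps)
qed

(* With H b c the derivative along b of the derivative along c, this is the second derivative
   along b1 + k b2. *)
definition hessian_along :: "('a \<Rightarrow> 'a \<Rightarrow> 'a \<Rightarrow> real) \<Rightarrow> 'a \<Rightarrow> 'a \<Rightarrow> real \<Rightarrow> 'a \<Rightarrow> real" where
  "hessian_along H b1 b2 k \<eta> = H b1 b1 \<eta> + k * H b2 b1 \<eta> + k * (H b1 b2 \<eta> + k * H b2 b2 \<eta>)"

lemma hessian_along_nonpos_at_max:
  fixes F :: "'a::real_normed_vector \<Rightarrow> real"
  assumes max: "\<And>\<xi>. F \<xi> \<le> F \<eta>"
    and G: "\<And>b \<xi>. b \<in> {b1, b2} \<Longrightarrow> ((\<lambda>s. F (\<xi> + s *\<^sub>R b)) has_real_derivative G b \<xi>) (at 0)"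
    and H: "\<And>b c \<xi>. b \<in> {b1, b2} \<Longrightarrow> c \<in> {b1, b2} \<Longrightarrow>
      ((\<lambda>s. G c (\<xi> + s *\<^sub>R b)) has_real_derivative H b c \<xi>) (at 0)"
    and G_cont: "continuous_on UNIV (G b2)"
    and H_cont: "\<And>c. c \<in> {b1, b2} \<Longrightarrow> continuous_on UNIV (H b2 c)"
  shows "hessian_along H b1 b2 k \<eta> \<le> 0"
proof (rule ccontr)
  assume "\<not> ?thesis"
  then have pos: "hessian_along H b1 b2 k \<eta> > 0" by simp
  define e where "e = b1 + k *\<^sub>R b2"
  define \<phi> where "\<phi> = (\<lambda>s. F (\<eta> + s *\<^sub>R e))"
  define \<psi> where "\<psi> = (\<lambda>s. G b1 (\<eta> + s *\<^sub>R e) + k * G b2 (\<eta> + s *\<^sub>R e))"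
  have \<phi>': "(\<phi> has_real_derivative \<psi> s) (at s)" for s
  proof -
    have "((\<lambda>r. F ((\<eta> + s *\<^sub>R e) + r *\<^sub>R e)) has_real_derivative \<psi> s) (at 0)"
      unfolding \<psi>_def e_def by (rule has_real_derivative_along_add_scaled) (use G G_cont in auto)
    then show ?thesis
      using DERIV_shift[of \<phi> "\<psi> s" 0 s] unfolding \<phi>_def by (simp add: algebra_simps)
  qed
  have "(\<psi> has_real_derivative hessian_along H b1 b2 k \<eta>) (at 0)"
    unfolding \<psi>_def e_def hessian_along_def
    by (intro DERIV_add DERIV_cmult has_real_derivative_along_add_scaled) (use H H_cont in auto)
  then obtain d where d: "d > 0" "\<And>h. h > 0 \<Longrightarrow> h < d \<Longrightarrow> \<psi> 0 < \<psi> h"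
    using DERIV_pos_inc_right[OF _ pos] by (metis add_0)
  have "\<psi> 0 = 0"
    using DERIV_local_max[OF \<phi>'[of 0], of 1] max unfolding \<phi>_def by simp
  moreover obtain z where z: "0 < z" "z < d / 2" "\<phi> (d / 2) - \<phi> 0 = d / 2 * \<psi> z"
    using MVT2[of 0 "d / 2" \<phi> \<psi>] \<phi>' d(1) by auto
  ultimately have "\<psi> z > 0"
    using d(2)[of z] by simp
  then have "\<phi> 0 < \<phi> (d / 2)"
    using z(3) d(1) by (smt (verit) mult_pos_pos half_gt_zero)
  then show False
    using max[of "\<eta> + (d / 2) *\<^sub>R e"] unfolding \<phi>_def by simp
qed

lemma has_real_derivative_power2_norm_along:
  fixes \<xi> b :: "'a::real_inner"
  shows "((\<lambda>s. (norm (\<xi> + s *\<^sub>R b))\<^sup>2) has_real_derivative 2 * (\<xi> \<bullet> b)) (at 0)"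
proof -
  have "(\<lambda>s. (norm (\<xi> + s *\<^sub>R b))\<^sup>2) = (\<lambda>s. \<xi> \<bullet> \<xi> + 2 * s * (\<xi> \<bullet> b) + s\<^sup>2 * (b \<bullet> b))"
    unfolding power2_norm_eq_inner
    by (auto simp: inner_add inner_commute algebra_simps power2_eq_square)
  then show ?thesis
    by (auto intro!: derivative_eq_intros)
qed

lemma hessian_along_lower_bound_at_min:
  fixes f :: "'a::real_inner \<Rightarrow> real"
  assumes min: "\<And>\<xi>. f \<eta> + \<beta> * (norm \<eta>)\<^sup>2 \<le> f \<xi> + \<beta> * (norm \<xi>)\<^sup>2"
    and G: "\<And>b \<xi>. b \<in> {b1, b2} \<Longrightarrow> ((\<lambda>s. f (\<xi> + s *\<^sub>R b)) has_real_derivative G b \<xi>) (at 0)"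
    and H: "\<And>b c \<xi>. b \<in> {b1, b2} \<Longrightarrow> c \<in> {b1, b2} \<Longrightarrow>
      ((\<lambda>s. G c (\<xi> + s *\<^sub>R b)) has_real_derivative H b c \<xi>) (at 0)"
    and G_cont: "continuous_on UNIV (G b2)"
    and H_cont: "\<And>c. c \<in> {b1, b2} \<Longrightarrow> continuous_on UNIV (H b2 c)"
    and orthonormal: "norm b1 = 1" "norm b2 = 1" "b1 \<bullet> b2 = 0"
  shows "- 2 * \<beta> * (1 + k\<^sup>2) \<le> hessian_along H b1 b2 k \<eta>"
proof -
  define G' where "G' b \<xi> = - (G b \<xi> + \<beta> * (2 * (\<xi> \<bullet> b)))" for b \<xi>
  define H' where "H' b c \<xi> = - (H b c \<xi> + 2 * \<beta> * (b \<bullet> c))" for b c \<xi>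
  have "hessian_along H' b1 b2 k \<eta> \<le> 0"
  proof (rule hessian_along_nonpos_at_max[where F="\<lambda>\<xi>. - (f \<xi> + \<beta> * (norm \<xi>)\<^sup>2)"])
    show "- (f \<xi> + \<beta> * (norm \<xi>)\<^sup>2) \<le> - (f \<eta> + \<beta> * (norm \<eta>)\<^sup>2)" for \<xi>
      using min[of \<xi>] by simp
    show "((\<lambda>s. - (f (\<xi> + s *\<^sub>R b) + \<beta> * (norm (\<xi> + s *\<^sub>R b))\<^sup>2)) has_real_derivative G' b \<xi>) (at 0)"
      if "b \<in> {b1, b2}" for b \<xi>
      unfolding G'_def
      by (intro DERIV_minus DERIV_add DERIV_cmult G that has_real_derivative_power2_norm_along)
    show "((\<lambda>s. G' c (\<xi> + s *\<^sub>R b)) has_real_derivative H' b c \<xi>) (at 0)"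
      if "b \<in> {b1, b2}" "c \<in> {b1, b2}" for b c \<xi>
      unfolding G'_def H'_def inner_add_left inner_scaleR_left
      by (auto intro!: derivative_eq_intros H[OF that] simp: inner_commute)
    show "continuous_on UNIV (G' b2)"
      unfolding G'_def by (intro continuous_intros G_cont)
    show "continuous_on UNIV (H' b2 c)" if "c \<in> {b1, b2}" for c
      unfolding H'_def by (intro continuous_intros H_cont that)
  qed
  moreover have "b1 \<bullet> b1 = 1" "b2 \<bullet> b2 = 1" "b2 \<bullet> b1 = 0"
    using orthonormal by (simp_all add: norm_eq_1 inner_commute)
  ultimately show ?thesis
    unfolding hessian_along_def H'_def using orthonormal(3) by (simp add: algebra_simps power2_eq_square)
qed

section \<open>The Heisenberg Laplacian\<close>

(* Since the coefficient a is constant along b1 and b2, applying Z twice produces no first-order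
   term; this is what makes X_i^2 and Y_i^2 second directional derivatives. *)
lemma dirder_twice_eq_hessian_along:
  fixes f :: "'n::finite heis \<Rightarrow> real"
  assumes G: "\<And>b \<xi>. b \<in> {b1, b2} \<Longrightarrow> ((\<lambda>s. f (\<xi> + s *\<^sub>R b)) has_real_derivative G b \<xi>) (at 0)"
    and H: "\<And>b c \<xi>. b \<in> {b1, b2} \<Longrightarrow> c \<in> {b1, b2} \<Longrightarrow>
      ((\<lambda>s. G c (\<xi> + s *\<^sub>R b)) has_real_derivative H b c \<xi>) (at 0)"
    and a_invariant: "\<And>b \<xi> s. b \<in> {b1, b2} \<Longrightarrow> a (\<xi> + s *\<^sub>R b) = a \<xi>"
  defines "Z \<equiv> \<lambda>g \<xi>. dirder g \<xi> b1 + a \<xi> * dirder g \<xi> b2"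
  shows "Z (Z f) \<eta> = hessian_along H b1 b2 (a \<eta>) \<eta>"
proof -
  have "dirder f \<xi> b = G b \<xi>" if "b \<in> {b1, b2}" for b \<xi>
    unfolding dirder_def using G[OF that] by (rule DERIV_imp_deriv)
  then have Zf: "Z f = (\<lambda>\<xi>. G b1 \<xi> + a \<xi> * G b2 \<xi>)"
    by (simp add: Z_def)
  have "dirder (Z f) \<eta> b = H b b1 \<eta> + a \<eta> * H b b2 \<eta>" if "b \<in> {b1, b2}" for b
  proof -
    have "((\<lambda>s. G b1 (\<eta> + s *\<^sub>R b) + a (\<eta> + s *\<^sub>R b) * G b2 (\<eta> + s *\<^sub>R b))
        has_real_derivative H b b1 \<eta> + a \<eta> * H b b2 \<eta>) (at 0)"
      unfolding a_invariant[OF that] by (intro DERIV_add DERIV_cmult H that) auto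
    then show ?thesis
      unfolding dirder_def Zf by (rule DERIV_imp_deriv)
  qed
  moreover have "Z g \<eta> = dirder g \<eta> b1 + a \<eta> * dirder g \<eta> b2" for g
    by (simp add: Z_def)
  ultimately show ?thesis
    unfolding hessian_along_def by (simp add: algebra_simps)
qed

lemma heis_basis:
  "((axis i 1, 0, 0) :: 'n::finite heis) \<in> Basis"
  "((0, axis i 1, 0) :: 'n heis) \<in> Basis"
  "((0, 0, 1) :: 'n heis) \<in> Basis"
  by (auto simp: Basis_prod_def zero_prod_def intro!: image_eqI)

lemma heis_lap_eq_sum_hessian_along:
  fixes f :: "'n::finite heis \<Rightarrow> real"
  assumes G: "\<And>b \<xi>. b \<in> Basis \<Longrightarrow> ((\<lambda>s. f (\<xi> + s *\<^sub>R b)) has_real_derivative G b \<xi>) (at 0)"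
    and H: "\<And>b c \<xi>. b \<in> Basis \<Longrightarrow> c \<in> Basis \<Longrightarrow>
      ((\<lambda>s. G c (\<xi> + s *\<^sub>R b)) has_real_derivative H b c \<xi>) (at 0)"
  shows "heis_lap f (x, y, \<tau>) =
    (\<Sum>i\<in>UNIV. hessian_along H (axis i 1, 0, 0) (0, 0, 1) (- 2 * y $ i) (x, y, \<tau>)
              + hessian_along H (0, axis i 1, 0) (0, 0, 1) (2 * x $ i) (x, y, \<tau>))"
proof -
  have "heisX i (heisX i f) (x, y, \<tau>)
      = hessian_along H (axis i 1, 0, 0) (0, 0, 1) (- 2 * y $ i) (x, y, \<tau>)" for i
  proof -
    define a where "a \<xi> = - 2 * fst (snd \<xi>) $ i" for \<xi> :: "'n heis"
    have "heisX i = (\<lambda>g \<xi>. dirder g \<xi> (axis i 1, 0, 0) + a \<xi> * dirder g \<xi> (0, 0, 1))"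
      by (simp add: fun_eq_iff heisX_def a_def)
    then have "heisX i (heisX i f) (x, y, \<tau>) = hessian_along H (axis i 1, 0, 0) (0, 0, 1) (a (x, y, \<tau>)) (x, y, \<tau>)"
      by (simp only:) (rule dirder_twice_eq_hessian_along, auto intro: G H heis_basis simp: a_def)
    then show ?thesis by (simp add: a_def)
  qed
  moreover have "heisY i (heisY i f) (x, y, \<tau>)
      = hessian_along H (0, axis i 1, 0) (0, 0, 1) (2 * x $ i) (x, y, \<tau>)" for i
  proof -
    define a where "a \<xi> = 2 * fst \<xi> $ i" for \<xi> :: "'n heis"
    have "heisY i = (\<lambda>g \<xi>. dirder g \<xi> (0, axis i 1, 0) + a \<xi> * dirder g \<xi> (0, 0, 1))"
      by (simp add: fun_eq_iff heisY_def a_def)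
    then have "heisY i (heisY i f) (x, y, \<tau>) = hessian_along H (0, axis i 1, 0) (0, 0, 1) (a (x, y, \<tau>)) (x, y, \<tau>)"
      by (simp only:) (rule dirder_twice_eq_hessian_along, auto intro: G H heis_basis simp: a_def)
    then show ?thesis by (simp add: a_def)
  qed
  ultimately show ?thesis
    unfolding heis_lap_def by simp
qed

lemma heis_lap_lower_bound_at_min:
  fixes f :: "'n::finite heis \<Rightarrow> real"
  assumes min: "\<And>\<xi>. f \<eta> + \<beta> * (norm \<eta>)\<^sup>2 \<le> f \<xi> + \<beta> * (norm \<xi>)\<^sup>2"
    and G: "\<And>b \<xi>. b \<in> Basis \<Longrightarrow> ((\<lambda>s. f (\<xi> + s *\<^sub>R b)) has_real_derivative G b \<xi>) (at 0)"
    and H: "\<And>b c \<xi>. b \<in> Basis \<Longrightarrow> c \<in> Basis \<Longrightarrow>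
      ((\<lambda>s. G c (\<xi> + s *\<^sub>R b)) has_real_derivative H b c \<xi>) (at 0)"
    and G_cont: "\<And>b. b \<in> Basis \<Longrightarrow> continuous_on UNIV (G b)"
    and H_cont: "\<And>b c. b \<in> Basis \<Longrightarrow> c \<in> Basis \<Longrightarrow> continuous_on UNIV (H b c)"
    and "0 \<le> \<beta>"
  shows "- 4 * \<beta> * (CARD('n) + 2 * (norm \<eta>)\<^sup>2) \<le> heis_lap f \<eta>"
proof -
  obtain x y \<tau> where \<eta>: "\<eta> = (x, y, \<tau>)"
    by (cases \<eta>) auto
  have hessian_ge: "- 2 * \<beta> * (1 + k\<^sup>2) \<le> hessian_along H b (0, 0, 1) k \<eta>"
    if "b \<in> Basis" "norm b = 1" "b \<bullet> (0, 0, 1) = 0" for b k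
    by (rule hessian_along_lower_bound_at_min[OF min])
      (use that heis_basis(3) in \<open>auto intro: G H G_cont H_cont\<close>)
  have norm_sq: "(norm v)\<^sup>2 = (\<Sum>i\<in>UNIV. (v $ i)\<^sup>2)" for v :: "real^'n"
    unfolding power2_norm_eq_inner by (simp add: inner_vec_def power2_eq_square)
  have "- 4 * \<beta> * (CARD('n) + 2 * (norm \<eta>)\<^sup>2) \<le> - 4 * \<beta> * CARD('n) - 8 * \<beta> * ((norm x)\<^sup>2 + (norm y)\<^sup>2)"
    using \<open>0 \<le> \<beta>\<close> unfolding \<eta> by (simp add: norm_Pair algebra_simps)
  also have "\<dots> = (\<Sum>i\<in>UNIV. - 4 * \<beta> - 8 * \<beta> * (x $ i)\<^sup>2 - 8 * \<beta> * (y $ i)\<^sup>2)"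
    unfolding norm_sq by (simp add: sum_subtractf sum.distrib sum_distrib_left algebra_simps)
  also have "\<dots> = (\<Sum>i\<in>UNIV. - 2 * \<beta> * (1 + (- 2 * y $ i)\<^sup>2) + - 2 * \<beta> * (1 + (2 * x $ i)\<^sup>2))"
    by (simp add: power2_eq_square algebra_simps)
  also have "\<dots> \<le> (\<Sum>i\<in>UNIV. hessian_along H (axis i 1, 0, 0) (0, 0, 1) (- 2 * y $ i) \<eta>
                        + hessian_along H (0, axis i 1, 0) (0, 0, 1) (2 * x $ i) \<eta>)"
    by (intro sum_mono add_mono hessian_ge) (simp_all add: heis_basis)
  also have "\<dots> = heis_lap f \<eta>"
    unfolding \<eta> by (rule heis_lap_eq_sum_hessian_along[symmetric]) (use G H in auto)
  finally show ?thesis .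
qed

section \<open>The first touching time\<close>

lemma DERIV_le_of_ge_on_left:
  fixes f g :: "real \<Rightarrow> real"
  assumes f': "(f has_real_derivative f') (at t)" and g': "(g has_real_derivative g') (at t)"
    and "f t = g t" and "a < t" and ge: "\<And>s. a < s \<Longrightarrow> s < t \<Longrightarrow> g s \<le> f s"
  shows "f' \<le> g'"
proof (rule ccontr)
  assume "\<not> f' \<le> g'"
  then obtain d where "d > 0" and d: "\<And>h. 0 < h \<Longrightarrow> h < d \<Longrightarrow> f (t - h) - g (t - h) < f t - g t"
    using DERIV_pos_inc_left[OF DERIV_diff[OF f' g']] by auto
  obtain h where "0 < h" "h < d" "h < t - a"
    using field_lbound_gt_zero[of d "t - a"] \<open>d > 0\<close> \<open>a < t\<close> by auto
  then show False
    using d[of h] ge[of "t - h"] \<open>f t = g t\<close> by linarith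
qed

lemma continuous_on_Times_fixed_fst:
  assumes "continuous_on (A \<times> B) (\<lambda>(t, x). f t x)" and "t \<in> A"
  shows "continuous_on B (f t)"
proof -
  have "continuous_on B ((\<lambda>(t, x). f t x) \<circ> (\<lambda>x. (t, x)))"
    by (rule continuous_on_compose[OF _ continuous_on_subset[OF assms(1)]])
      (use assms(2) in \<open>auto intro!: continuous_intros\<close>)
  then show ?thesis by (simp add: o_def)
qed

lemma continuous_on_Times_fixed_snd:
  assumes "continuous_on (A \<times> B) (\<lambda>(t, x). f t x)" and "x \<in> B"
  shows "continuous_on A (\<lambda>t. f t x)"
proof -
  have "continuous_on A ((\<lambda>(t, x). f t x) \<circ> (\<lambda>t. (t, x)))"
    by (rule continuous_on_compose[OF _ continuous_on_subset[OF assms(1)]])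
      (use assms(2) in \<open>auto intro!: continuous_intros\<close>)
  then show ?thesis by (simp add: o_def)
qed

lemma continuous_on_Icc_nonneg_at_right:
  fixes f :: "real \<Rightarrow> real"
  assumes "continuous_on {a..b} f" and "a < b" and "\<And>s. s \<in> {a..<b} \<Longrightarrow> 0 \<le> f s"
  shows "0 \<le> f b"
  using continuous_ge_on_closure[of "{a..<b}" f b 0] assms by simp

lemma first_touching_time:
  fixes u v :: "real \<Rightarrow> 'a::topological_space \<Rightarrow> real"
  assumes u_cont: "continuous_on ({0..T} \<times> UNIV) (\<lambda>(t, x). u t x)"
    and v_cont: "continuous_on ({0..T} \<times> UNIV) (\<lambda>(t, x). v t x)"
    and "0 \<le> T" and "compact K"
    and outside: "\<And>t x. t \<in> {0..T} \<Longrightarrow> x \<notin> K \<Longrightarrow> v t x \<le> u t x"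
    and initial: "\<And>x. x \<in> K \<Longrightarrow> v 0 x < u 0 x"
    and final: "x1 \<in> K" "u T x1 \<le> v T x1"
  obtains t0 x0 where "t0 \<in> {0<..T}" "x0 \<in> K" "u t0 x0 = v t0 x0"
    "\<And>x. v t0 x \<le> u t0 x" "\<And>t. t \<in> {0..<t0} \<Longrightarrow> v t x0 < u t x0"
proof -
  define S where "S = ({0..T} \<times> K) \<inter> {z \<in> {0..T} \<times> UNIV. u (fst z) (snd z) \<le> v (fst z) (snd z)}"
  have "compact S"
    unfolding S_def
    using u_cont v_cont
    by (intro compact_Int_closed compact_Times compact_Icc \<open>compact K\<close> continuous_on_closed_Collect_le
        closed_Times) (auto simp: case_prod_beta')
  moreover have "(T, x1) \<in> S"
    unfolding S_def using final \<open>0 \<le> T\<close> by simp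
  ultimately obtain t0 where "t0 \<in> fst ` S" and t0_min: "\<And>t. t \<in> fst ` S \<Longrightarrow> t0 \<le> t"
    using compact_attains_inf[OF compact_continuous_image[OF continuous_on_fst[OF continuous_on_id]]]
    by (metis empty_iff image_eqI)
  then obtain x0 where "(t0, x0) \<in> S"
    by auto
  then have "t0 \<in> {0..T}" "x0 \<in> K" and below_x0: "u t0 x0 \<le> v t0 x0"
    unfolding S_def by auto
  have before: "v t x < u t x" if "t \<in> {0..<t0}" "x \<in> K" for t x
    using t0_min[of t] that \<open>t0 \<in> {0..T}\<close> unfolding S_def by force
  have "t0 \<noteq> 0"
    using initial[OF \<open>x0 \<in> K\<close>] below_x0 by auto
  then have "0 < t0"
    using \<open>t0 \<in> {0..T}\<close> by simp
  have "v t0 x \<le> u t0 x" for x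
  proof (cases "x \<in> K")
    case True
    have "{0..t0} \<subseteq> {0..T}"
      using \<open>t0 \<in> {0..T}\<close> by auto
    then have "continuous_on {0..t0} (\<lambda>t. u t x - v t x)"
      by (intro continuous_on_diff continuous_on_subset[OF continuous_on_Times_fixed_snd[OF u_cont]]
          continuous_on_subset[OF continuous_on_Times_fixed_snd[OF v_cont]] UNIV_I)
    then have "0 \<le> u t0 x - v t0 x"
      by (rule continuous_on_Icc_nonneg_at_right[OF _ \<open>0 < t0\<close>]) (use before[OF _ True] in force)
    then show ?thesis by simp
  qed (use outside \<open>t0 \<in> {0..T}\<close> in auto)
  then show ?thesis
    using \<open>0 < t0\<close> \<open>t0 \<in> {0..T}\<close> \<open>x0 \<in> K\<close> below_x0 before
    by (intro that[of t0 x0]) (auto intro: order.antisym)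
qed

lemma exists_scale_above_on_unit_ball:
  fixes w :: "'a::euclidean_space \<Rightarrow> real"
  assumes "continuous_on UNIV w" and "\<And>x. 0 < w x"
  obtains A where "0 < A" "\<And>x. norm x \<le> 1 \<Longrightarrow> c < A * w x"
proof -
  have "\<exists>m\<in>cball 0 1. \<forall>x\<in>cball 0 1. w m \<le> w x"
    by (rule continuous_attains_inf) (auto intro: continuous_on_subset[OF assms(1)])
  then obtain m where w_min: "\<And>x. norm x \<le> 1 \<Longrightarrow> w m \<le> w x"
    by (metis mem_cball_0)
  define A where "A = (\<bar>c\<bar> + 1) / w m"
  have "0 < A"
    unfolding A_def using assms(2)[of m] by simp
  moreover have "c < A * w x" if "norm x \<le> 1" for x
  proof -
    have "c < A * w m"
      unfolding A_def using assms(2)[of m] by simp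
    also have "\<dots> \<le> A * w x"
      using w_min[OF that] \<open>0 < A\<close> by simp
    finally show ?thesis .
  qed
  ultimately show ?thesis
    using that by blast
qed

lemma classical_solution_at_time:
  assumes "classical_solution T q p u0 u" and "0 < t" "t < T"
  obtains ut G H where
    "\<And>\<eta>. ((\<lambda>s. u s \<eta>) has_real_derivative ut \<eta>) (at t)"
    "\<And>b \<eta>. b \<in> Basis \<Longrightarrow> ((\<lambda>s. u t (\<eta> + s *\<^sub>R b)) has_real_derivative G b \<eta>) (at 0)"
    "\<And>b c \<eta>. b \<in> Basis \<Longrightarrow> c \<in> Basis \<Longrightarrow>
      ((\<lambda>s. G c (\<eta> + s *\<^sub>R b)) has_real_derivative H b c \<eta>) (at 0)"
    "\<And>b. b \<in> Basis \<Longrightarrow> continuous_on UNIV (G b)"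
    "\<And>b c. b \<in> Basis \<Longrightarrow> c \<in> Basis \<Longrightarrow> continuous_on UNIV (H b c)"
    "\<And>\<eta>. ut \<eta> = (u t \<eta>) powr q * heis_lap (u t) \<eta> + (u t \<eta>) powr p"
proof -
  obtain ut D1 D2 where
    ut: "\<forall>t\<in>{0<..T}. \<forall>\<eta>. ((\<lambda>s. u s \<eta>) has_real_derivative ut t \<eta>) (at t within {0..T})" and
    D1: "\<forall>b\<in>Basis. \<forall>t\<in>{0<..T}. \<forall>\<eta>. ((\<lambda>s. u t (\<eta> + s *\<^sub>R b)) has_real_derivative D1 b t \<eta>) (at 0)" and
    D2: "\<forall>b\<in>Basis. \<forall>c\<in>Basis. \<forall>t\<in>{0<..T}. \<forall>\<eta>.
      ((\<lambda>s. D1 c t (\<eta> + s *\<^sub>R b)) has_real_derivative D2 b c t \<eta>) (at 0)" and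
    D1_cont: "\<forall>b\<in>Basis. continuous_on ({0<..T} \<times> UNIV) (\<lambda>(t, \<eta>). D1 b t \<eta>)" and
    D2_cont: "\<forall>b\<in>Basis. \<forall>c\<in>Basis. continuous_on ({0<..T} \<times> UNIV) (\<lambda>(t, \<eta>). D2 b c t \<eta>)" and
    pde: "\<forall>t\<in>{0<..T}. \<forall>\<eta>. ut t \<eta> = (u t \<eta>) powr q * heis_lap (u t) \<eta> + (u t \<eta>) powr p"
    using assms(1) unfolding classical_solution_def by blast
  have t: "t \<in> {0<..T}" and "t \<in> interior {0..T}"
    using assms(2,3) by auto
  show ?thesis
  proof (rule that[of "ut t" "\<lambda>b. D1 b t" "\<lambda>b c. D2 b c t"])
    show "((\<lambda>s. u s \<eta>) has_real_derivative ut t \<eta>) (at t)" for \<eta>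
      using ut t at_within_interior[OF \<open>t \<in> interior {0..T}\<close>] by metis
    show "continuous_on UNIV (D1 b t)" if "b \<in> Basis" for b
      using continuous_on_Times_fixed_fst[OF D1_cont[rule_format, OF that] t] .
    show "continuous_on UNIV (D2 b c t)" if "b \<in> Basis" "c \<in> Basis" for b c
      using continuous_on_Times_fixed_fst[OF D2_cont[rule_format, OF that] t] .
  qed (use D1 D2 pde t in blast)+
qed

section \<open>The self-similar barrier\<close>

(* The exponents are forced by scaling: \<alpha> p = \<alpha> + 1
   makes the time derivative of the peak comparable with peak^p, and \<gamma> + \<alpha> q = 1 does the same
   for curv * peak^q; the choice a0^(p-q-1) = K + 1 then lets u^p absorb the Laplacian term. *)
locale blowup_barrier =
  fixes q p N :: real
  assumes q_ge_1: "1 \<le> q" and q_plus_1_less: "q + 1 < p" and N_nonneg: "0 \<le> N"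
begin

definition "\<alpha> = 1 / (p - 1)"
definition "\<gamma> = (p - q - 1) / (p - 1)"
definition "\<epsilon> = min (1 / 2) ((p - q - 1) / 4)"
definition "\<mu> = \<epsilon> powr (p - 1) * (p - 1) / 2"
definition "K = 4 * (2 * N + 4) / \<epsilon> powr (p - 1)"
definition "a0 = (K + 1) powr (1 / (p - q - 1))"
definition "Tmax = 1 / (\<mu> * a0 powr (p - 1))"
definition "\<theta> t = 1 - t / Tmax"
definition "peak t = a0 * \<theta> t powr (- \<alpha>)"
definition "curv t = a0 * \<theta> t powr (- \<alpha> - \<gamma>)"
definition "barrier t x = peak t - curv t * (norm x)\<^sup>2"

lemma p_gt_1: "1 < p"
  using q_ge_1 q_plus_1_less by simp

lemma constants_pos: "0 < \<alpha>" "0 < \<gamma>" "0 < \<epsilon>" "0 < \<mu>" "0 < K" "0 < a0" "0 < Tmax"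
proof -
  show "0 < \<alpha>" "0 < \<gamma>" "0 < \<epsilon>"
    unfolding \<alpha>_def \<gamma>_def \<epsilon>_def using q_ge_1 q_plus_1_less by auto
  then show "0 < \<mu>" "0 < K"
    unfolding \<mu>_def K_def using q_ge_1 q_plus_1_less N_nonneg by auto
  then show "0 < a0"
    unfolding a0_def by simp
  then show "0 < Tmax"
    unfolding Tmax_def using \<open>0 < \<mu>\<close> by simp
qed

lemma alpha_mu: "\<alpha> * \<mu> = \<epsilon> powr (p - 1) / 2"
proof -
  have "p - 1 \<noteq> 0" using p_gt_1 by simp
  then show ?thesis unfolding \<alpha>_def \<mu>_def by (simp add: field_simps)
qed

lemma epsilon_bounds: "\<epsilon> \<le> 1 / 2" "4 * (\<alpha> * \<epsilon>) \<le> \<gamma>"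
proof -
  show "\<epsilon> \<le> 1 / 2"
    unfolding \<epsilon>_def by simp
  have "4 * \<epsilon> \<le> p - q - 1"
    using min.cobounded2[of "1 / 2" "(p - q - 1) / 4"] unfolding \<epsilon>_def by simp
  then have "4 * \<epsilon> / (p - 1) \<le> (p - q - 1) / (p - 1)"
    using p_gt_1 by (intro divide_right_mono) auto
  then show "4 * (\<alpha> * \<epsilon>) \<le> \<gamma>"
    unfolding \<alpha>_def \<gamma>_def by simp
qed

lemma theta_pos: "t < Tmax \<Longrightarrow> 0 < \<theta> t"
  unfolding \<theta>_def using constants_pos by simp

lemma theta_le_1: "0 \<le> t \<Longrightarrow> \<theta> t \<le> 1"
  unfolding \<theta>_def using constants_pos by simp

lemma peak_pos: "t < Tmax \<Longrightarrow> 0 < peak t"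
  unfolding peak_def using constants_pos theta_pos[of t] by simp

lemma curv_pos: "t < Tmax \<Longrightarrow> 0 < curv t"
  unfolding curv_def using constants_pos theta_pos[of t] by simp

lemma curv_eq: "t < Tmax \<Longrightarrow> curv t = peak t * \<theta> t powr (- \<gamma>)"
  unfolding curv_def peak_def by (simp add: powr_add[symmetric])

lemma has_real_derivative_theta_powr:
  assumes "t < Tmax"
  shows "((\<lambda>t. \<theta> t powr r) has_real_derivative - r * \<theta> t powr r / (Tmax * \<theta> t)) (at t)"
proof -
  have "((\<lambda>t. 1 - t / Tmax) has_real_derivative - 1 / Tmax) (at t)"
    using constants_pos by (auto intro!: derivative_eq_intros)
  from DERIV_chain2[OF has_real_derivative_powr[OF theta_pos[OF assms]] this[folded \<theta>_def]]
  have "((\<lambda>t. \<theta> t powr r) has_real_derivative r * \<theta> t powr (r - 1) * (- 1 / Tmax)) (at t)"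
    by (simp add: \<theta>_def)
  moreover have "\<theta> t powr (r - 1) = \<theta> t powr r / \<theta> t"
    using theta_pos[OF assms] by (simp add: powr_diff)
  ultimately show ?thesis
    by (simp add: field_simps)
qed

lemma has_real_derivative_barrier:
  assumes "t < Tmax"
  shows "((\<lambda>t. barrier t x) has_real_derivative
    (\<alpha> * peak t - (\<alpha> + \<gamma>) * curv t * (norm x)\<^sup>2) / (Tmax * \<theta> t)) (at t)"
proof -
  have "((\<lambda>t. a0 * \<theta> t powr (- \<alpha>) - a0 * \<theta> t powr (- \<alpha> - \<gamma>) * (norm x)\<^sup>2) has_real_derivative
      a0 * (\<alpha> * \<theta> t powr (- \<alpha>) / (Tmax * \<theta> t))
      - a0 * ((\<alpha> + \<gamma>) * \<theta> t powr (- \<alpha> - \<gamma>) / (Tmax * \<theta> t)) * (norm x)\<^sup>2) (at t)"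
    using has_real_derivative_theta_powr[OF assms, of "- \<alpha>"]
      has_real_derivative_theta_powr[OF assms, of "- \<alpha> - \<gamma>"]
    by (intro DERIV_diff DERIV_cmult DERIV_cmult_right) (simp_all add: algebra_simps)
  then show ?thesis
    unfolding barrier_def peak_def curv_def
    by (rule DERIV_cong) (simp add: diff_divide_distrib algebra_simps)
qed

lemma peak_powr:
  assumes "t < Tmax"
  shows "peak t powr p = a0 powr p * \<theta> t powr (- \<alpha> - 1)"
proof -
  have "- \<alpha> * p = - \<alpha> - 1"
    unfolding \<alpha>_def using p_gt_1 by (simp add: field_simps)
  then show ?thesis
    unfolding peak_def using constants_pos theta_pos[OF assms] by (simp add: powr_mult powr_powr)
qed

lemma peak_div_eq:
  assumes "t < Tmax"
  shows "peak t / (Tmax * \<theta> t) = \<mu> * peak t powr p"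
proof -
  have "a0 powr p = a0 * a0 powr (p - 1)"
    using constants_pos by (simp add: powr_diff)
  moreover have "\<theta> t powr (- \<alpha> - 1) = \<theta> t powr (- \<alpha>) / \<theta> t"
    using theta_pos[OF assms] by (simp add: powr_diff)
  ultimately show ?thesis
    unfolding peak_powr[OF assms] unfolding peak_def Tmax_def by simp
qed

lemma curv_mult_powr_eq:
  assumes "t < Tmax" "0 < h"
  shows "curv t * (peak t * h) powr q = peak t powr p * h powr q / (K + 1)"
proof -
  have "\<gamma> + \<alpha> * q = (p - q - 1) / (p - 1) + q / (p - 1)"
    unfolding \<alpha>_def \<gamma>_def by simp
  also have "\<dots> = ((p - q - 1) + q) / (p - 1)"
    by (rule add_divide_distrib[symmetric])
  also have "\<dots> = 1"
    using p_gt_1 by simp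
  finally have "\<gamma> + \<alpha> * q = 1" .
  then have \<theta>_powr: "\<theta> t powr (- \<alpha> - \<gamma>) * \<theta> t powr (- \<alpha> * q) = \<theta> t powr (- \<alpha> - 1)"
    by (simp add: powr_add[symmetric] algebra_simps)
  have "a0 powr (p - q - 1) = K + 1"
    unfolding a0_def using constants_pos q_plus_1_less by (simp add: powr_powr)
  then have a0_powr: "a0 * a0 powr q = a0 powr p / (K + 1)"
    using constants_pos by (simp add: powr_diff powr_add field_simps)
  have "curv t * (peak t * h) powr q
      = (a0 * a0 powr q) * (\<theta> t powr (- \<alpha> - \<gamma>) * \<theta> t powr (- \<alpha> * q)) * h powr q"
    unfolding curv_def peak_def using constants_pos theta_pos[OF assms(1)] assms(2)
    by (simp add: powr_mult powr_powr mult_ac)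
  also have "\<dots> = peak t powr p * h powr q / (K + 1)"
    unfolding \<theta>_powr a0_powr peak_powr[OF assms(1)] by simp
  finally show ?thesis .
qed

(* barrier_strict_subsolution divided by peak^p, where h = barrier / peak. *)
lemma profile_negative:
  assumes "0 \<le> \<kappa>" "\<kappa> < \<alpha> * \<mu>" "0 < h" "h \<le> 1"
  shows "\<mu> * \<alpha> - \<mu> * (\<alpha> + \<gamma>) * (1 - h) + \<kappa> * h powr q - h powr p < 0"
proof -
  have "\<kappa> * h powr q \<le> \<kappa> * h"
    using powr_mono'[of 1 q h] assms q_ge_1 by (simp add: mult_left_mono)
  then have bound: "\<mu> * \<alpha> - \<mu> * (\<alpha> + \<gamma>) * (1 - h) + \<kappa> * h powr q - h powr p
      \<le> (\<mu> * \<alpha> + \<kappa>) * h - \<mu> * \<gamma> * (1 - h) - h powr p"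
    by (simp add: algebra_simps)
  have rate: "\<mu> * \<alpha> + \<kappa> < \<epsilon> powr (p - 1)"
    using assms(2) alpha_mu by (simp add: algebra_simps)
  show ?thesis
  proof (cases "\<epsilon> \<le> h")
    case True
    then have "\<epsilon> powr (p - 1) \<le> h powr (p - 1)"
      using constants_pos p_gt_1 by (intro powr_mono2) auto
    then have "(\<mu> * \<alpha> + \<kappa>) * h < h powr (p - 1) * h"
      using rate assms(3) by (intro mult_strict_right_mono) auto
    also have "\<dots> = h powr p"
      using assms(3) by (simp add: powr_diff)
    finally show ?thesis
      using bound constants_pos assms(4) by (smt (verit) mult_nonneg_nonneg)
  next
    case False
    have "(\<mu> * \<alpha> + \<kappa>) * h \<le> \<epsilon> powr (p - 1) * \<epsilon>"
      using rate False assms constants_pos by (intro mult_mono) auto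
    also have "\<dots> = 2 * \<mu> * (\<alpha> * \<epsilon>)"
      using alpha_mu by (simp add: algebra_simps)
    also have "\<dots> \<le> \<mu> * \<gamma> / 2"
      using epsilon_bounds(2) constants_pos by simp
    also have "\<dots> < \<mu> * \<gamma> * (1 - h)"
      using False epsilon_bounds(1) constants_pos by (simp add: field_simps)
    finally show ?thesis
      using bound assms(3) by (smt (verit) powr_gt_zero)
  qed
qed

lemma barrier_strict_subsolution:
  assumes "0 \<le> t" "t < Tmax" "0 < barrier t x"
  shows "(\<alpha> * peak t - (\<alpha> + \<gamma>) * curv t * (norm x)\<^sup>2) / (Tmax * \<theta> t)
    + 2 * (2 * N + 4) * curv t * barrier t x powr q < barrier t x powr p"
proof -
  define h where "h = 1 - \<theta> t powr (- \<gamma>) * (norm x)\<^sup>2"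
  define \<kappa> where "\<kappa> = 2 * (2 * N + 4) / (K + 1)"
  have P: "0 < peak t" using peak_pos[OF assms(2)] .
  have barrier_eq: "barrier t x = peak t * h"
    unfolding barrier_def h_def curv_eq[OF assms(2)] by (simp add: algebra_simps)
  have "0 < h"
    using assms(3) P unfolding barrier_eq by (simp add: zero_less_mult_iff)
  have "h \<le> 1"
    unfolding h_def using theta_pos[OF assms(2)] by simp
  have "0 \<le> \<kappa>"
    unfolding \<kappa>_def using N_nonneg constants_pos by simp
  have "\<kappa> < 2 * (2 * N + 4) / K"
    unfolding \<kappa>_def using N_nonneg constants_pos by (intro divide_strict_left_mono) auto
  also have "\<dots> = \<alpha> * \<mu>"
    unfolding alpha_mu K_def using constants_pos N_nonneg by (simp add: field_simps)
  finally have "\<kappa> < \<alpha> * \<mu>" .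
  have "(\<alpha> * peak t - (\<alpha> + \<gamma>) * curv t * (norm x)\<^sup>2) / (Tmax * \<theta> t)
      = peak t / (Tmax * \<theta> t) * (\<alpha> - (\<alpha> + \<gamma>) * (1 - h))"
    unfolding h_def curv_eq[OF assms(2)] by (simp add: field_simps)
  then have "(\<alpha> * peak t - (\<alpha> + \<gamma>) * curv t * (norm x)\<^sup>2) / (Tmax * \<theta> t)
      + 2 * (2 * N + 4) * curv t * barrier t x powr q - barrier t x powr p
      = \<mu> * peak t powr p * (\<alpha> - (\<alpha> + \<gamma>) * (1 - h))
        + 2 * (2 * N + 4) * (curv t * (peak t * h) powr q) - (peak t * h) powr p"
    unfolding peak_div_eq[OF assms(2)] barrier_eq by simp
  also have "\<dots> = peak t powr p * (\<mu> * \<alpha> - \<mu> * (\<alpha> + \<gamma>) * (1 - h) + \<kappa> * h powr q - h powr p)"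
    unfolding curv_mult_powr_eq[OF assms(2) \<open>0 < h\<close>] \<kappa>_def
    using P \<open>0 < h\<close> constants_pos by (simp add: powr_mult field_simps)
  also have "\<dots> < 0"
    using profile_negative[OF \<open>0 \<le> \<kappa>\<close> \<open>\<kappa> < \<alpha> * \<mu>\<close> \<open>0 < h\<close> \<open>h \<le> 1\<close>] P
    by (simp add: mult_pos_neg)
  finally show ?thesis by simp
qed

lemma barrier_neg_outside_ball:
  assumes "0 \<le> t" "t < Tmax" "1 < norm x"
  shows "barrier t x < 0"
proof -
  have "\<theta> t powr (- \<alpha>) \<le> \<theta> t powr (- \<alpha> - \<gamma>)"
    using theta_pos[OF assms(2)] theta_le_1[OF assms(1)] constants_pos by (intro powr_mono') auto
  then have "peak t \<le> curv t"
    unfolding peak_def curv_def using constants_pos by simp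
  moreover have "curv t < curv t * (norm x)\<^sup>2"
    using curv_pos[OF assms(2)] assms(3) by (simp add: one_less_power)
  ultimately show ?thesis
    unfolding barrier_def by simp
qed

lemma barrier_initial_le: "barrier 0 x \<le> a0"
  unfolding barrier_def peak_def curv_def \<theta>_def using constants_pos by simp

lemma continuous_on_barrier:
  assumes "T1 < Tmax"
  shows "continuous_on ({0..T1} \<times> UNIV) (\<lambda>(t, x). barrier t x)"
proof -
  have "\<forall>z\<in>{0..T1} \<times> UNIV. 1 - fst z / Tmax \<noteq> 0"
    using theta_pos assms unfolding \<theta>_def by force
  then show ?thesis
    unfolding barrier_def peak_def curv_def \<theta>_def case_prod_beta'
    using constants_pos by (intro continuous_intros) auto
qed

lemma peak_unbounded:
  obtains T1 where "0 < T1" "T1 < Tmax" "M < peak T1"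
proof -
  define \<theta>1 where "\<theta>1 = min (1 / 2) ((a0 / (\<bar>M\<bar> + a0)) powr (1 / \<alpha>))"
  have "0 < \<theta>1" "\<theta>1 < 1"
    unfolding \<theta>1_def using constants_pos by auto
  define T1 where "T1 = Tmax * (1 - \<theta>1)"
  have "\<theta> T1 = \<theta>1"
    unfolding \<theta>_def T1_def using constants_pos by simp
  have "(\<bar>M\<bar> + a0) / a0 = ((a0 / (\<bar>M\<bar> + a0)) powr (1 / \<alpha>)) powr (- \<alpha>)"
    using constants_pos by (simp add: powr_powr powr_minus_divide)
  also have "\<dots> \<le> \<theta>1 powr (- \<alpha>)"
    unfolding \<theta>1_def using constants_pos by (intro powr_mono2') auto
  finally have "\<bar>M\<bar> + a0 \<le> peak T1"
    unfolding peak_def \<open>\<theta> T1 = \<theta>1\<close> using constants_pos by (simp add: divide_le_eq mult.commute)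
  moreover have "0 < T1" "T1 < Tmax"
    unfolding T1_def using constants_pos \<open>0 < \<theta>1\<close> \<open>\<theta>1 < 1\<close> by auto
  ultimately show ?thesis
    using that constants_pos by force
qed

lemma classical_solution_cannot_touch_barrier:
  fixes u :: "real \<Rightarrow> 'n::finite heis \<Rightarrow> real"
  assumes N: "N = CARD('n)"
    and sol: "classical_solution Tmax q p u0 u"
    and "0 < t0" "t0 < Tmax" "norm \<eta>0 \<le> 1" "0 < u t0 \<eta>0"
    and touch: "u t0 \<eta>0 = barrier t0 \<eta>0"
    and below: "\<And>\<eta>. barrier t0 \<eta> \<le> u t0 \<eta>"
    and before: "\<And>t. t \<in> {0..<t0} \<Longrightarrow> barrier t \<eta>0 < u t \<eta>0"
  shows False
proof -
  obtain ut G H where ut: "\<And>\<eta>. ((\<lambda>s. u s \<eta>) has_real_derivative ut \<eta>) (at t0)"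
    and G: "\<And>b \<eta>. b \<in> Basis \<Longrightarrow> ((\<lambda>s. u t0 (\<eta> + s *\<^sub>R b)) has_real_derivative G b \<eta>) (at 0)"
    and H: "\<And>b c \<eta>. b \<in> Basis \<Longrightarrow> c \<in> Basis \<Longrightarrow>
      ((\<lambda>s. G c (\<eta> + s *\<^sub>R b)) has_real_derivative H b c \<eta>) (at 0)"
    and "\<And>b. b \<in> Basis \<Longrightarrow> continuous_on UNIV (G b)"
    and "\<And>b c. b \<in> Basis \<Longrightarrow> c \<in> Basis \<Longrightarrow> continuous_on UNIV (H b c)"
    and pde: "\<And>\<eta>. ut \<eta> = (u t0 \<eta>) powr q * heis_lap (u t0) \<eta> + (u t0 \<eta>) powr p"
    using classical_solution_at_time[OF sol \<open>0 < t0\<close> \<open>t0 < Tmax\<close>] by blast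
  have time: "ut \<eta>0 \<le> (\<alpha> * peak t0 - (\<alpha> + \<gamma>) * curv t0 * (norm \<eta>0)\<^sup>2) / (Tmax * \<theta> t0)"
  proof (rule DERIV_le_of_ge_on_left[OF ut has_real_derivative_barrier[OF \<open>t0 < Tmax\<close>] touch \<open>0 < t0\<close>])
    show "barrier s \<eta>0 \<le> u s \<eta>0" if "0 < s" "s < t0" for s
      using before[of s] that by simp
  qed
  have "- 4 * curv t0 * (CARD('n) + 2 * (norm \<eta>0)\<^sup>2) \<le> heis_lap (u t0) \<eta>0"
  proof (rule heis_lap_lower_bound_at_min[OF _ G H])
    show "u t0 \<eta>0 + curv t0 * (norm \<eta>0)\<^sup>2 \<le> u t0 \<xi> + curv t0 * (norm \<xi>)\<^sup>2" for \<xi>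
      using below[of \<xi>] touch unfolding barrier_def by simp
  qed (use curv_pos[OF \<open>t0 < Tmax\<close>] \<open>\<And>b. b \<in> Basis \<Longrightarrow> continuous_on UNIV (G b)\<close>
      \<open>\<And>b c. b \<in> Basis \<Longrightarrow> c \<in> Basis \<Longrightarrow> continuous_on UNIV (H b c)\<close> in auto)
  moreover have "curv t0 * (norm \<eta>0)\<^sup>2 \<le> curv t0 * 1"
    using \<open>norm \<eta>0 \<le> 1\<close> curv_pos[OF \<open>t0 < Tmax\<close>] by (intro mult_left_mono power_le_one) auto
  ultimately have "- 2 * curv t0 * (2 * N + 4) \<le> heis_lap (u t0) \<eta>0"
    unfolding N by (simp add: algebra_simps)
  then have space: "(u t0 \<eta>0) powr q * (- 2 * curv t0 * (2 * N + 4)) \<le> (u t0 \<eta>0) powr q * heis_lap (u t0) \<eta>0"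
    by (intro mult_left_mono) auto
  have "(\<alpha> * peak t0 - (\<alpha> + \<gamma>) * curv t0 * (norm \<eta>0)\<^sup>2) / (Tmax * \<theta> t0)
      + 2 * (2 * N + 4) * curv t0 * (u t0 \<eta>0) powr q < (u t0 \<eta>0) powr p"
    using barrier_strict_subsolution[of t0 \<eta>0] touch \<open>0 < t0\<close> \<open>t0 < Tmax\<close> \<open>0 < u t0 \<eta>0\<close> by simp
  with time space pde[of \<eta>0] show False
    by (simp add: algebra_simps)
qed

lemma solution_touches_barrier:
  fixes u :: "real \<Rightarrow> 'a::euclidean_space \<Rightarrow> real"
  assumes u_cont: "continuous_on ({0..Tmax} \<times> UNIV) (\<lambda>(t, x). u t x)"
    and pos: "\<And>t x. 0 \<le> t \<Longrightarrow> 0 < u t x"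
    and initial: "\<And>x. norm x \<le> 1 \<Longrightarrow> a0 < u 0 x"
  obtains t0 x0 where "0 < t0" "t0 < Tmax" "norm x0 \<le> 1" "u t0 x0 = barrier t0 x0"
    "\<And>x. barrier t0 x \<le> u t0 x" "\<And>t. t \<in> {0..<t0} \<Longrightarrow> barrier t x0 < u t x0"
proof -
  have "\<exists>t\<in>{0..Tmax}. \<forall>s\<in>{0..Tmax}. u s 0 \<le> u t 0"
    using constants_pos by (intro continuous_attains_sup continuous_on_Times_fixed_snd[OF u_cont]) auto
  then obtain M where M: "\<And>t. t \<in> {0..Tmax} \<Longrightarrow> u t 0 \<le> M"
    by blast
  obtain T1 where "0 < T1" "T1 < Tmax" "M < peak T1"
    by (rule peak_unbounded)
  obtain t0 x0 where "t0 \<in> {0<..T1}" "x0 \<in> cball 0 1" "u t0 x0 = barrier t0 x0"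
    "\<And>x. barrier t0 x \<le> u t0 x" "\<And>t. t \<in> {0..<t0} \<Longrightarrow> barrier t x0 < u t x0"
  proof (rule first_touching_time[of T1 u barrier "cball 0 1" 0])
    show "continuous_on ({0..T1} \<times> UNIV) (\<lambda>(t, x). u t x)"
      by (rule continuous_on_subset[OF u_cont]) (use \<open>T1 < Tmax\<close> in auto)
    show "barrier t x \<le> u t x" if "t \<in> {0..T1}" "x \<notin> cball 0 1" for t x
      using barrier_neg_outside_ball[of t x] pos[of t x] that \<open>T1 < Tmax\<close> by auto
    show "barrier 0 x < u 0 x" if "x \<in> cball 0 1" for x
      using barrier_initial_le[of x] initial[of x] that by simp
    show "u T1 0 \<le> barrier T1 0"
      using M[of T1] \<open>M < peak T1\<close> \<open>0 < T1\<close> \<open>T1 < Tmax\<close> unfolding barrier_def by simp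
  qed (use continuous_on_barrier \<open>0 < T1\<close> \<open>T1 < Tmax\<close> in auto)
  then show ?thesis
    using that \<open>T1 < Tmax\<close> by auto
qed

lemma no_positive_classical_solution:
  fixes u :: "real \<Rightarrow> 'n::finite heis \<Rightarrow> real"
  assumes "N = CARD('n)" and sol: "classical_solution Tmax q p u0 u"
    and pos: "\<And>t \<eta>. 0 \<le> t \<Longrightarrow> 0 < u t \<eta>"
    and initial: "\<And>\<eta>. norm \<eta> \<le> 1 \<Longrightarrow> a0 < u0 \<eta>"
  shows False
proof -
  have "continuous_on ({0..Tmax} \<times> UNIV) (\<lambda>(t, \<eta>). u t \<eta>)" and "\<And>\<eta>. u 0 \<eta> = u0 \<eta>"
    using sol unfolding classical_solution_def by auto
  then obtain t0 \<eta>0 where "0 < t0" "t0 < Tmax" "norm \<eta>0 \<le> 1" and touch: "u t0 \<eta>0 = barrier t0 \<eta>0"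
    and below: "\<And>\<eta>. barrier t0 \<eta> \<le> u t0 \<eta>" and before: "\<And>t. t \<in> {0..<t0} \<Longrightarrow> barrier t \<eta>0 < u t \<eta>0"
    using solution_touches_barrier[of u] pos initial by metis
  show False
    by (rule classical_solution_cannot_touch_barrier[OF assms(1) sol _ _ _ _ touch below before])
      (use \<open>0 < t0\<close> \<open>t0 < Tmax\<close> \<open>norm \<eta>0 \<le> 1\<close> pos in auto)
qed

end

theorem mainTheorem10:
  fixes q p :: real and w :: "'n::finite heis \<Rightarrow> real"
  assumes "q \<ge> 1" and "p > 1" and "q + 1 < p"
    and "continuous_on UNIV w" and "bounded (range w)" and "\<forall>\<eta>. w \<eta> > 0"
  shows "\<exists>A>0. \<not> (\<exists>u. global_classical_solution q p (\<lambda>\<eta>. A * w \<eta>) u \<and>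
                        (\<forall>t\<ge>0. \<forall>\<eta>. u t \<eta> > 0))"
proof -
  interpret blowup_barrier q p "real CARD('n)"
    using assms(1,3) by unfold_locales auto
  (* Only the positive minimum of w on the unit ball matters. *)
  obtain A where "0 < A" and initial: "\<And>\<eta>. norm \<eta> \<le> 1 \<Longrightarrow> a0 < A * w \<eta>"
    using exists_scale_above_on_unit_ball[OF assms(4)] assms(6) by blast
  show ?thesis
  proof (intro exI[of _ A] conjI \<open>0 < A\<close> notI, elim exE conjE)
    fix u
    assume "global_classical_solution q p (\<lambda>\<eta>. A * w \<eta>) u" and "\<forall>t\<ge>0. \<forall>\<eta>. u t \<eta> > 0"
    then show False
      using no_positive_classical_solution[OF refl, of "\<lambda>\<eta>. A * w \<eta>" u] initial constants_pos
      unfolding global_classical_solution_def by blast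
  qed
qed

end
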